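(* Let $N\ge1$. The closure of $\Phi'_N$ in $\mathrm{PSL}_2(\hat{\mathbb{Z}}_{\mathrm{odd}})$ is $\mathrm{PSL}_2(\hat{\mathbb{Z}}_{\mathrm{odd}})$ if $3$ does not divide $N$, and is $\hat D_{\mathrm{odd}}$ if $3$ divides $N$.
   Context: $\bar\Gamma(2)=\Gamma(2)/\{\pm1\}\subset\mathrm{PSL}_2(\mathbb{Z})$, freely generated by the classes $A$ of $\begin{pmatrix}1&2\\0&1\end{pmatrix}$ and $B$ of $\begin{pmatrix}1&0\\2&1\end{pmatrix}$. Let $N'=N$ if $N$ is odd, $N'=N/2$ if $N$ is even. Let $H_{N,N,N'}$ be the group generated by $x,y$ with $z=xyx^{-1}y^{-1}$ central and $x^N=y^N=z^{N'}=1$; $\Phi'_N$ is the kernel of the homomorphism $\bar\Gamma(2)\to H_{N,N,N'}$ with $A\mapsto x$, $B\mapsto y$. Let $\hat{\mathbb{Z}}_{\mathrm{odd}}=\prod_{p\ne2}\mathbb{Z}_p$, with $\mathrm{PSL}_2(\mathbb{Z})\subset\mathrm{PSL}_2(\hat{\mathbb{Z}}_{\mathrm{odd}})$ and the profinite topology. $\hat D_{\mathrm{odd}}$ is the inverse image in $\mathrm{PSL}_2(\hat{\mathbb{Z}}_{\mathrm{odd}})$, under reduction mod $3$, of the Klein four-subgroup $D_3\subset\mathrm{PSL}_2(\mathbb{Z}/3\mathbb{Z})$ consisting of the classes of $\pm I$, $\pm\begin{pmatrix}0&-1\\1&0\end{pmatrix}$, $\pm\begin{pmatrix}-1&1\\1&1\end{pmatrix}$,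 $\pm\begin{pmatrix}1&1\\1&-1\end{pmatrix}$. *)

theory Defs
  imports "HOL-Analysis.Analysis"
begin

text \<open>A matrix (a b; c d) is represented by the tuple (a, b, c, d).\<close>
type_synonym mat = "int \<times> int \<times> int \<times> int"

fun mmul :: "mat \<Rightarrow> mat \<Rightarrow> mat" where
  "mmul (a, b, c, d) (a', b', c', d') =
     (a*a' + b*c', a*b' + b*d', c*a' + d*c', c*b' + d*d')"

fun mdet :: "mat \<Rightarrow> int" where
  "mdet (a, b, c, d) = a*d - b*c"

text \<open>Inverse of a determinant-one matrix.\<close>
fun minv :: "mat \<Rightarrow> mat" where
  "minv (a, b, c, d) = (d, -b, -c, a)"

fun mneg :: "mat \<Rightarrow> mat" where
  "mneg (a, b, c, d) = (-a, -b, -c, -d)"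

definition mI :: mat where "mI = (1, 0, 0, 1)"

fun mpow :: "mat \<Rightarrow> nat \<Rightarrow> mat" where
  "mpow M 0 = mI"
| "mpow M (Suc n) = mmul M (mpow M n)"

fun mred :: "nat \<Rightarrow> mat \<Rightarrow> mat" where
  "mred m (a, b, c, d) = (a mod int m, b mod int m, c mod int m, d mod int m)"

definition SL2Z :: "mat set" where
  "SL2Z = {M. mdet M = 1}"

text \<open>Principal congruence subgroup Gamma(2) (contains -I).\<close>
definition Gamma2 :: "mat set" where
  "Gamma2 = {M. M \<in> SL2Z \<and> mred 2 M = mI}"

text \<open>Elements of PSL_2(Z) are the classes {M, -M}.\<close>
definition psl_class :: "mat \<Rightarrow> mat set" where
  "psl_class M = {M, mneg M}"

definition matA :: mat where "matA = (1, 2, 0, 1)"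
definition matB :: mat where "matB = (1, 0, 2, 1)"

definition commut :: "mat \<Rightarrow> mat \<Rightarrow> mat" where
  "commut X Y = mmul (mmul X Y) (mmul (minv X) (minv Y))"

definition Nprime :: "nat \<Rightarrow> nat" where
  "Nprime N = (if odd N then N else N div 2)"

text \<open>Images in Gamma(2) of the defining relators of H_{N,N,N'}:
  x^N, y^N, z^{N'}, [z,x], [z,y] with z = [x,y].\<close>
definition relators :: "nat \<Rightarrow> mat set" where
  "relators N = {mpow matA N, mpow matB N, mpow (commut matA matB) (Nprime N),
                 commut (commut matA matB) matA, commut (commut matA matB) matB}"

text \<open>Since bar-Gamma(2) is free on A, B, the kernel of bar-Gamma(2) -> H_{N,N,N'}
  (A |-> x, B |-> y) is the normal closure in bar-Gamma(2) of the relators.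
  PhiT N is its full preimage in Gamma(2) (so it contains -I).\<close>
inductive_set PhiT :: "nat \<Rightarrow> mat set" for N :: nat where
  one: "mI \<in> PhiT N"
| negone: "mneg mI \<in> PhiT N"
| conj: "g \<in> Gamma2 \<Longrightarrow> r \<in> relators N \<Longrightarrow> mmul (mmul g r) (minv g) \<in> PhiT N"
| mult: "a \<in> PhiT N \<Longrightarrow> b \<in> PhiT N \<Longrightarrow> mmul a b \<in> PhiT N"
| inv: "a \<in> PhiT N \<Longrightarrow> minv a \<in> PhiT N"

definition PhiPrime :: "nat \<Rightarrow> mat set set" where
  "PhiPrime N = psl_class ` PhiT N"

text \<open>An element of SL_2(Zhat_odd) is a compatible family (G m)_{m odd} with
  G m in SL_2(Z/mZ) (entries normalised to [0,m)); at even m the family is 0.\<close>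
definition SLhat :: "(nat \<Rightarrow> mat) set" where
  "SLhat = {G. (\<forall>m. odd m \<longrightarrow> mred m (G m) = G m \<and> (mdet (G m) - 1) mod int m = 0
                        \<and> (\<forall>d. d dvd m \<longrightarrow> mred d (G m) = G d))
             \<and> (\<forall>m. even m \<longrightarrow> G m = (0, 0, 0, 0))}"

definition negHat :: "(nat \<Rightarrow> mat) \<Rightarrow> (nat \<Rightarrow> mat)" where
  "negHat G = (\<lambda>m. if odd m then mred m (mneg (G m)) else G m)"

definition pslhat_of :: "(nat \<Rightarrow> mat) \<Rightarrow> (nat \<Rightarrow> mat) set" where
  "pslhat_of G = {G, negHat G}"

definition PSLhat :: "(nat \<Rightarrow> mat) set set" where
  "PSLhat = pslhat_of ` SLhat"

text \<open>Profinite topology: SL_2(Zhat_odd) carries the subspace topology of the product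
  of discrete spaces (inverse limit topology); PSL_2(Zhat_odd) the quotient topology.\<close>
definition SLhat_top :: "(nat \<Rightarrow> mat) topology" where
  "SLhat_top = subtopology (product_topology (\<lambda>m. discrete_topology UNIV) UNIV) SLhat"

definition PSLhat_top :: "(nat \<Rightarrow> mat) set topology" where
  "PSLhat_top = topology (\<lambda>U. U \<subseteq> PSLhat \<and> openin SLhat_top {G \<in> SLhat. pslhat_of G \<in> U})"

definition iota :: "mat \<Rightarrow> (nat \<Rightarrow> mat)" where
  "iota M = (\<lambda>m. if odd m then mred m M else (0, 0, 0, 0))"

definition psl_embed :: "mat set \<Rightarrow> (nat \<Rightarrow> mat) set" where
  "psl_embed X = iota ` X"

text \<open>The Klein four-subgroup D_3 of PSL_2(Z/3Z), given by its 8 representatives in SL_2(Z/3Z).\<close>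
definition D3 :: "mat set" where
  "D3 = mred 3 ` {mI, mneg mI, (0, -1, 1, 0), mneg (0, -1, 1, 0),
                  (-1, 1, 1, 1), mneg (-1, 1, 1, 1), (1, 1, 1, -1), mneg (1, 1, 1, -1)}"

definition Dhat_odd :: "(nat \<Rightarrow> mat) set set" where
  "Dhat_odd = {X \<in> PSLhat. \<exists>G \<in> X. G 3 \<in> D3}"

end

theory Submission
  imports Defs "HOL-Algebra.Multiplicative_Group" "HOL-Number_Theory.Cong"
begin

text \<open>
  Fix an odd m and let W be the set of matrices in SL_2(Z) congruent mod m to an element of
  Phi'_N. Because Gamma(2) maps onto SL_2(Z/mZ) (every matrix is congruent to a product of
  elementary ones, whose entries may be taken even), W is normal in SL_2(Z). In the quotient
  SL_2(Z)/W let a and b be the images of (1 1; 0 1) and (1 0; 1 1). The relators of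
  H_{N,N,N'} make the commutator of a^2 and b^2 central; as a and b have odd order, the
  commutator of a and b is then central too, and the braid relation together with
  (a b^-1)^3 = 1 (the image of -I) collapse the quotient to the cyclic group generated by
  a = b^-1, where a^3 = 1 and a^(2N) = 1. So the quotient is trivial unless 3 divides both N
  and m, and in that case the image of Phi'_N mod m is the preimage of the Klein group D_3,
  into which Phi'_N reduces mod 3. The profinite closure is read off one odd level at a time.
\<close>

lemma mmul_assoc: "mmul (mmul X Y) Z = mmul X (mmul Y Z)"
  by (cases X; cases Y; cases Z) (simp add: algebra_simps)

lemma mmul_mI [simp]: "mmul mI X = X" "mmul X mI = X"
  by (cases X; simp add: mI_def)+

lemma mdet_mmul: "mdet (mmul X Y) = mdet X * mdet Y"
  by (cases X; cases Y) (simp add: algebra_simps)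

lemma mdet_minv [simp]: "mdet (minv X) = mdet X"
  by (cases X) (simp add: algebra_simps)

lemma mdet_mI [simp]: "mdet mI = 1"
  by (simp add: mI_def)

lemma mdet_mneg [simp]: "mdet (mneg X) = mdet X"
  by (cases X) simp

lemma mmul_minv_right: "mdet X = 1 \<Longrightarrow> mmul X (minv X) = mI"
  by (cases X) (simp add: mI_def algebra_simps)

lemma mmul_minv_left: "mdet X = 1 \<Longrightarrow> mmul (minv X) X = mI"
  by (cases X) (simp add: mI_def algebra_simps)

lemma minv_minv [simp]: "minv (minv X) = X"
  by (cases X) simp

lemma minv_mmul: "minv (mmul X Y) = mmul (minv Y) (minv X)"
  by (cases X; cases Y) (simp add: algebra_simps)

lemma minv_mI [simp]: "minv mI = mI"
  by (simp add: mI_def)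

lemma mneg_mneg [simp]: "mneg (mneg X) = X"
  by (cases X) simp

lemma mmul_mneg_mI: "mmul (mmul X (mneg mI)) Y = mneg (mmul X Y)"
  by (cases X; cases Y) (simp add: mI_def)

lemma mpow_add: "mpow X (i + j) = mmul (mpow X i) (mpow X j)"
  by (induction i) (auto simp: mmul_assoc)

lemma mdet_mpow: "mdet X = 1 \<Longrightarrow> mdet (mpow X n) = 1"
  by (induction n) (auto simp: mdet_mmul)

lemma mred_mmul: "mred m (mmul X Y) = mred m (mmul (mred m X) (mred m Y))"
proof -
  have mod_sum_prod: "((a mod k) * (b mod k) + (c mod k) * (d mod k)) mod k = (a * b + c * d) mod k"
    for a b c d k :: int
    by (metis mod_add_eq mod_mult_eq)
  show ?thesis
    by (cases X; cases Y) (simp add: mod_sum_prod)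
qed

lemma mred_mred [simp]: "mred m (mred m X) = mred m X"
  by (cases X) simp

lemma mred_mred_dvd: "d dvd m \<Longrightarrow> mred d (mred m X) = mred d X"
  by (cases X) (simp add: mod_mod_cancel)

lemma mred_minv: "mred m (minv X) = mred m (minv (mred m X))"
  by (cases X) (simp add: mod_simps)

lemma mred_mneg: "mred m (mneg X) = mred m (mneg (mred m X))"
  by (cases X) (simp add: mod_simps)

lemma mred_mmul_cong:
  "mred m X = mred m X' \<Longrightarrow> mred m Y = mred m Y' \<Longrightarrow> mred m (mmul X Y) = mred m (mmul X' Y')"
  by (metis mred_mmul)

lemma mred_minv_cong: "mred m X = mred m X' \<Longrightarrow> mred m (minv X) = mred m (minv X')"
  by (metis mred_minv)

lemma mred_eqI:
  assumes "int m dvd x1 - y1" "int m dvd x2 - y2" "int m dvd x3 - y3" "int m dvd x4 - y4"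
  shows "mred m (x1, x2, x3, x4) = mred m (y1, y2, y3, y4)"
  using assms by (simp add: mod_eq_dvd_iff)

lemma mdet_mred_mod: "(mdet (mred m X) - 1) mod int m = (mdet X - 1) mod int m"
proof (cases X)
  case (fields a b c d)
  have "[a mod m * (d mod m) - b mod m * (c mod m) - 1 = a * d - b * c - 1] (mod m)" for m :: int
    by (intro cong_diff cong_mult cong_refl) (simp_all add: cong_def)
  then show ?thesis
    using fields by (simp add: cong_def)
qed

definition upper :: "int \<Rightarrow> mat" where
  "upper t = (1, t, 0, 1)"

definition lower :: "int \<Rightarrow> mat" where
  "lower t = (1, 0, t, 1)"

lemma mdet_upper [simp]: "mdet (upper t) = 1" and mdet_lower [simp]: "mdet (lower t) = 1"
  by (simp_all add: upper_def lower_def)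

lemma mpow_upper: "mpow (upper t) n = upper (int n * t)"
  by (induction n) (auto simp: upper_def mI_def algebra_simps)

lemma mpow_lower: "mpow (lower t) n = lower (int n * t)"
  by (induction n) (auto simp: lower_def mI_def algebra_simps)

lemma mred_upper_mod: "mred m (upper (t mod int m)) = mred m (upper t)"
  and mred_lower_mod: "mred m (lower (t mod int m)) = mred m (lower t)"
  by (simp_all add: upper_def lower_def)

lemma matA_eq: "matA = upper 2" and matB_eq: "matB = lower 2"
  by (simp_all add: matA_def matB_def upper_def lower_def)

inductive_set elementary :: "mat set" where
  mI: "mI \<in> elementary"
| upper: "E \<in> elementary \<Longrightarrow> mmul (upper t) E \<in> elementary"
| lower: "E \<in> elementary \<Longrightarrow> mmul (lower t) E \<in> elementary"

lemma elementary_mmul: "E \<in> elementary \<Longrightarrow> F \<in> elementary \<Longrightarrow> mmul E F \<in> elementary"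
  by (induction E rule: elementary.induct) (auto simp: mmul_assoc intro: elementary.intros)

lemma upper_elementary: "upper t \<in> elementary" and lower_elementary: "lower t \<in> elementary"
  using elementary.upper[OF elementary.mI, of t] elementary.lower[OF elementary.mI, of t] by simp_all

lemma elementary_mdet: "E \<in> elementary \<Longrightarrow> mdet E = 1"
  by (induction E rule: elementary.induct) (auto simp: mdet_mmul)

text \<open>Whitehead's trick: diag(a, a') with a a' = 1 is a product of six elementary matrices.\<close>
lemma diagonal_congruent_elementary:
  assumes "int m dvd a * a' - 1"
  shows "\<exists>E\<in>elementary. mred m E = mred m (a, 0, 0, a')"
proof -
  define E where "E = mmul (mmul (mmul (mmul (mmul (upper a) (lower (- a'))) (upper a))
                     (upper (- 1))) (lower 1)) (upper (- 1))"
  have "E \<in> elementary"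
    unfolding E_def by (intro elementary_mmul upper_elementary lower_elementary)
  moreover have "E = (2 * a - a * a * a', a * a' - 1, 1 - a * a', a')"
    unfolding E_def by (simp add: upper_def lower_def algebra_simps)
  moreover have "mred m (2 * a - a * a * a', a * a' - 1, 1 - a * a', a') = mred m (a, 0, 0, a')"
  proof (rule mred_eqI)
    show "int m dvd 2 * a - a * a * a' - a"
      using dvd_mult[OF assms, of "- a"] by (simp add: algebra_simps)
    show "int m dvd 1 - a * a' - 0"
      using assms by (simp add: dvd_diff_commute)
  qed (use assms in simp_all)
  ultimately show ?thesis
    by metis
qed

lemma unit_corner_congruent_elementary:
  assumes unit: "int m dvd a * a' - 1" and det: "int m dvd a * d - b * c - 1"
  shows "\<exists>E\<in>elementary. mred m E = mred m (a, b, c, d)"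
proof -
  obtain D where D: "D \<in> elementary" "mred m D = mred m (a, 0, 0, a')"
    using diagonal_congruent_elementary[OF unit] by blast
  define E where "E = mmul (mmul (lower (c * a')) D) (upper (a' * b))"
  have "E \<in> elementary"
    unfolding E_def using D by (intro elementary_mmul upper_elementary lower_elementary)
  moreover have "mred m E = mred m (mmul (mmul (lower (c * a')) (a, 0, 0, a')) (upper (a' * b)))"
    unfolding E_def by (intro mred_mmul_cong D refl)
  moreover have "mmul (mmul (lower (c * a')) (a, 0, 0, a')) (upper (a' * b))
      = (a, a * a' * b, c * a' * a, c * a' * a * a' * b + a')"
    by (simp add: upper_def lower_def algebra_simps)
  moreover have "mred m (a, a * a' * b, c * a' * a, c * a' * a * a' * b + a') = mred m (a, b, c, d)"
  proof (rule mred_eqI)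
    show "int m dvd a * a' * b - b"
      using dvd_mult[OF unit, of b] by (simp add: algebra_simps)
    show "int m dvd c * a' * a - c"
      using dvd_mult[OF unit, of c] by (simp add: algebra_simps)
    have "c * a' * a * a' * b + a' - d
        = (a * a' - 1) * (2 * d + (a * a' - 1) * d - a') - (a * d - b * c - 1) * (a' * a * a')"
      by (simp add: algebra_simps)
    then show "int m dvd c * a' * a * a' * b + a' - d"
      using unit det by simp
  qed simp
  ultimately show ?thesis
    by metis
qed

lemma prime_dvd_prod_primes_iff:
  fixes p :: "'a :: factorial_semiring"
  assumes "finite S" "\<forall>q\<in>S. prime q" "prime p"
  shows "p dvd \<Prod>S \<longleftrightarrow> p \<in> S"
proof
  assume "p dvd \<Prod>S"
  then obtain q where "q \<in> S" "p dvd q"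
    using prime_dvd_prod_iff[OF assms(1,3), of "\<lambda>x. x"] by blast
  moreover have "prime q"
    using \<open>q \<in> S\<close> assms(2) by blast
  ultimately show "p \<in> S"
    using primes_dvd_imp_eq[OF assms(3)] by metis
next
  assume "p \<in> S"
  then show "p dvd \<Prod>S"
    by (rule dvd_prod_eqI[OF assms(1)]) simp
qed

lemma coprime_if_no_common_prime:
  fixes a b :: "'a :: factorial_semiring"
  assumes "b \<noteq> 0" and no_common_prime: "\<And>p. prime p \<Longrightarrow> p dvd a \<Longrightarrow> p dvd b \<Longrightarrow> False"
  shows "coprime a b"
proof (rule coprimeI)
  fix q assume q: "q dvd a" "q dvd b"
  show "is_unit q"
  proof (rule ccontr)
    assume "\<not> is_unit q"
    moreover have "q \<noteq> 0"
      using q(2) assms(1) by auto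
    ultimately obtain p where "prime p" "p dvd q"
      using prime_divisor_exists by blast
    then show False
      using no_common_prime dvd_trans[OF _ q(1)] dvd_trans[OF _ q(2)] by blast
  qed
qed

text \<open>The shift t is the product of the primes dividing m but not a.\<close>
lemma exists_coprime_shift:
  fixes a c m :: int
  assumes "m \<noteq> 0" and no_common_prime: "\<And>p. prime p \<Longrightarrow> p dvd m \<Longrightarrow> p dvd a \<Longrightarrow> p dvd c \<Longrightarrow> False"
  shows "\<exists>t. coprime (a + t * c) m"
proof -
  define S where "S = {p. prime p \<and> p dvd m \<and> \<not> p dvd a}"
  have "finite S"
    using finite_divisors_int[OF \<open>m \<noteq> 0\<close>] by (rule rev_finite_subset) (auto simp: S_def)
  define t where "t = \<Prod>S"
  have p_dvd_t: "p dvd t \<longleftrightarrow> p \<in> S" if "prime p" for p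
    unfolding t_def using prime_dvd_prod_primes_iff[OF \<open>finite S\<close> _ that] by (simp add: S_def)
  have "coprime (a + t * c) m"
  proof (rule coprime_if_no_common_prime[OF \<open>m \<noteq> 0\<close>])
    fix p assume p: "prime p" "p dvd a + t * c" "p dvd m"
    show False
    proof (cases "p dvd a")
      case True
      then have "p dvd t * c"
        using p(2) by (simp add: dvd_add_right_iff)
      moreover have "\<not> p dvd t"
        using p_dvd_t[OF p(1)] True by (simp add: S_def)
      ultimately have "p dvd c"
        using prime_dvd_multD[OF p(1)] by blast
      then show False
        using no_common_prime p True by blast
    next
      case False
      then have "p dvd t * c"
        using p_dvd_t[OF p(1)] p by (simp add: S_def)
      then show False
        using p(2) False by (simp add: dvd_add_left_iff)
    qed
  qed
  then show ?thesis
    by blast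
qed

lemma congruent_elementary:
  assumes "m > 0" and det: "int m dvd mdet Y - 1"
  shows "\<exists>E\<in>elementary. mred m E = mred m Y"
proof -
  obtain a b c d where Y: "Y = (a, b, c, d)"
    by (cases Y)
  have det': "int m dvd a * d - b * c - 1"
    using det Y by simp
  have "\<exists>t. coprime (a + t * c) (int m)"
  proof (rule exists_coprime_shift)
    fix p :: int
    assume "prime p" "p dvd int m" "p dvd a" "p dvd c"
    then have "p dvd a * d - b * c" and "p dvd a * d - b * c - 1"
      using dvd_trans[OF _ det'] by simp_all
    then have "p dvd (a * d - b * c) - (a * d - b * c - 1)"
      by (rule dvd_diff)
    then show False
      using \<open>prime p\<close> by (simp add: prime_int_iff)
  qed (use \<open>m > 0\<close> in simp)
  then obtain t where "coprime (a + t * c) (int m)"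
    by blast
  then obtain a' where "[(a + t * c) * a' = 1] (mod int m)"
    using cong_solve_coprime_int by blast
  then have unit: "int m dvd (a + t * c) * a' - 1"
    by (simp add: cong_iff_dvd_diff dvd_diff_commute)
  have "(a + t * c) * d - (b + t * d) * c = a * d - b * c"
    by (simp add: algebra_simps)
  then obtain E where E: "E \<in> elementary" "mred m E = mred m (a + t * c, b + t * d, c, d)"
    using unit_corner_congruent_elementary[OF unit, of d "b + t * d" c] det' by auto
  have "mmul (upper (- t)) (a + t * c, b + t * d, c, d) = Y"
    using Y by (simp add: upper_def algebra_simps)
  then have "mred m (mmul (upper (- t)) E) = mred m Y"
    using mred_mmul_cong[OF refl E(2), of "upper (- t)"] by simp
  then show ?thesis
    using elementary.upper[OF E(1)] by blast
qed

lemma Gamma2_mdet: "g \<in> Gamma2 \<Longrightarrow> mdet g = 1"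
  by (simp add: Gamma2_def SL2Z_def)

lemma mI_in_Gamma2: "mI \<in> Gamma2"
  by (simp add: Gamma2_def SL2Z_def mI_def)

lemma Gamma2_mmul: "g \<in> Gamma2 \<Longrightarrow> h \<in> Gamma2 \<Longrightarrow> mmul g h \<in> Gamma2"
  unfolding Gamma2_def SL2Z_def by (auto simp: mdet_mmul mred_mmul[of 2 g h]) (simp add: mI_def)

lemma upper_in_Gamma2: "even t \<Longrightarrow> upper t \<in> Gamma2"
  and lower_in_Gamma2: "even t \<Longrightarrow> lower t \<in> Gamma2"
  by (simp_all add: Gamma2_def SL2Z_def upper_def lower_def mI_def)

text \<open>For odd m every elementary generator is congruent mod m to one with an even entry.\<close>
lemma elementary_congruent_Gamma2:
  assumes "odd m" "E \<in> elementary"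
  shows "\<exists>g\<in>Gamma2. mred m g = mred m E"
  using assms(2)
proof (induction E rule: elementary.induct)
  case mI
  then show ?case
    using mI_in_Gamma2 by blast
next
  case (upper E t)
  then obtain g where g: "g \<in> Gamma2" "mred m g = mred m E"
    by blast
  define t' where "t' = (if even t then t else t + int m)"
  have "upper t' \<in> Gamma2"
    using \<open>odd m\<close> by (intro upper_in_Gamma2) (simp add: t'_def)
  moreover have "mred m (upper t') = mred m (upper t)"
    by (simp add: t'_def upper_def)
  ultimately show ?case
    using g mred_mmul_cong Gamma2_mmul by metis
next
  case (lower E t)
  then obtain g where g: "g \<in> Gamma2" "mred m g = mred m E"
    by blast
  define t' where "t' = (if even t then t else t + int m)"
  have "lower t' \<in> Gamma2"
    using \<open>odd m\<close> by (intro lower_in_Gamma2) (simp add: t'_def)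
  moreover have "mred m (lower t') = mred m (lower t)"
    by (simp add: t'_def lower_def)
  ultimately show ?case
    using g mred_mmul_cong Gamma2_mmul by metis
qed

lemma Gamma2_surj_mod_odd:
  assumes "odd m" "int m dvd mdet X - 1"
  shows "\<exists>g\<in>Gamma2. mred m g = mred m X"
proof -
  have "m > 0"
    using \<open>odd m\<close> by (cases m) auto
  then obtain E where "E \<in> elementary" "mred m E = mred m X"
    using congruent_elementary assms(2) by blast
  then show ?thesis
    using elementary_congruent_Gamma2[OF \<open>odd m\<close>] by metis
qed

lemma relators_mdet: "r \<in> relators N \<Longrightarrow> mdet r = 1"
  by (auto simp: relators_def commut_def matA_def matB_def mdet_mpow mdet_mmul)

lemma PhiT_mdet: "P \<in> PhiT N \<Longrightarrow> mdet P = 1"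
  by (induction P rule: PhiT.induct) (auto simp: mdet_mmul Gamma2_mdet relators_mdet mI_def)

lemma relators_subset_PhiT: "relators N \<subseteq> PhiT N"
  using PhiT.conj[OF mI_in_Gamma2] by fastforce

lemma PhiT_conj_Gamma2:
  assumes "P \<in> PhiT N" "g \<in> Gamma2"
  shows "mmul (mmul g P) (minv g) \<in> PhiT N"
  using assms(1)
proof (induction P rule: PhiT.induct)
  case one
  then show ?case
    using mmul_minv_right[OF Gamma2_mdet[OF assms(2)]] by (simp add: PhiT.one)
next
  case negone
  then show ?case
    using mmul_minv_right[OF Gamma2_mdet[OF assms(2)]] by (simp add: PhiT.negone mmul_mneg_mI)
next
  case (conj h r)
  have "mmul (mmul g (mmul (mmul h r) (minv h))) (minv g) = mmul (mmul (mmul g h) r) (minv (mmul g h))"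
    by (simp add: mmul_assoc minv_mmul)
  then show ?case
    using PhiT.conj[OF Gamma2_mmul[OF assms(2) conj.hyps(1)] conj.hyps(2)] by simp
next
  case (mult a b)
  have "mmul (mmul g (mmul a b)) (minv g)
      = mmul (mmul (mmul g a) (minv g)) (mmul (mmul g b) (minv g))"
  proof -
    have "mmul (minv g) (mmul g Y) = Y" for Y
      using mmul_minv_left[OF Gamma2_mdet[OF assms(2)]] by (simp flip: mmul_assoc)
    then show ?thesis
      by (simp add: mmul_assoc)
  qed
  then show ?case
    using PhiT.mult[OF mult.IH] by simp
next
  case (inv a)
  have "minv (mmul (mmul g a) (minv g)) = mmul (mmul g (minv a)) (minv g)"
    by (simp add: mmul_assoc minv_mmul)
  then show ?case
    using PhiT.inv[OF inv.IH] by simp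
qed

section \<open>A collapsing lemma in abstract groups\<close>

context group
begin

lemma commute_if_commutator_one:
  assumes "x \<in> carrier G" "y \<in> carrier G" "x \<otimes> y \<otimes> (inv x \<otimes> inv y) = \<one>"
  shows "x \<otimes> y = y \<otimes> x"
proof -
  have "inv y \<otimes> (y \<otimes> x) = x"
    using assms(1,2) by (simp flip: m_assoc)
  then have "x \<otimes> y = x \<otimes> y \<otimes> (inv x \<otimes> inv y) \<otimes> (y \<otimes> x)"
    using assms(1,2) by (simp add: m_assoc)
  then show ?thesis
    using assms by simp
qed

lemma pow_twisted_commute_left:
  assumes carr: "x \<in> carrier G" "y \<in> carrier G" "z \<in> carrier G"
    and twist: "x \<otimes> y = z \<otimes> y \<otimes> x" and zx: "z \<otimes> x = x \<otimes> z"
  shows "x [^] (i::nat) \<otimes> y = z [^] i \<otimes> y \<otimes> x [^] i"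
proof (induction i)
  case (Suc i)
  have "x [^] Suc i \<otimes> y = x \<otimes> (x [^] i \<otimes> y)"
    using carr by (subst nat_pow_Suc2) (simp_all add: m_assoc)
  also have "\<dots> = (x \<otimes> z [^] i) \<otimes> y \<otimes> x [^] i"
    using Suc carr by (simp add: m_assoc)
  also have "\<dots> = z [^] i \<otimes> (x \<otimes> y) \<otimes> x [^] i"
    using group_commutes_pow[OF zx, symmetric] carr by (simp add: m_assoc)
  also have "\<dots> = z [^] Suc i \<otimes> y \<otimes> x [^] Suc i"
    using carr nat_pow_Suc2[of x i] by (simp add: twist m_assoc)
  finally show ?case .
qed (simp add: carr)

lemma pow_twisted_commute:
  assumes carr: "x \<in> carrier G" "y \<in> carrier G" "z \<in> carrier G"
    and twist: "x \<otimes> y = z \<otimes> y \<otimes> x" and zx: "z \<otimes> x = x \<otimes> z" and zy: "z \<otimes> y = y \<otimes> z"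
  shows "x [^] (i::nat) \<otimes> y [^] (j::nat) = z [^] (i * j) \<otimes> y [^] j \<otimes> x [^] i"
proof (induction j)
  case (Suc j)
  have "x [^] i \<otimes> y [^] Suc j = (x [^] i \<otimes> y [^] j) \<otimes> y"
    using carr by (simp add: m_assoc)
  also have "\<dots> = z [^] (i * j) \<otimes> y [^] j \<otimes> (x [^] i \<otimes> y)"
    using Suc carr by (simp add: m_assoc)
  also have "\<dots> = z [^] (i * j) \<otimes> (y [^] j \<otimes> z [^] i) \<otimes> y \<otimes> x [^] i"
    using pow_twisted_commute_left[OF carr twist zx] carr by (simp add: m_assoc)
  also have "\<dots> = z [^] (i * j) \<otimes> z [^] i \<otimes> y [^] j \<otimes> y \<otimes> x [^] i"
    using group_commutes_pow[OF zy, of j] group_commutes_pow[of y "z [^] i" j] carr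
    by (simp add: group_commutes_pow[OF zy] m_assoc)
  also have "\<dots> = z [^] (i * Suc j) \<otimes> y [^] Suc j \<otimes> x [^] i"
    using carr nat_pow_mult[of z "i * j" i] by (simp add: m_assoc add.commute)
  finally show ?case .
qed (simp add: carr)

lemma eq_if_braid_twisted:
  assumes carr: "x \<in> carrier G" "w \<in> carrier G" "c \<in> carrier G"
    and twist: "x \<otimes> w = c \<otimes> w \<otimes> x" and cw: "c \<otimes> w = w \<otimes> c"
    and braid: "x \<otimes> w \<otimes> x = w \<otimes> x \<otimes> w"
  shows "x = w"
proof -
  have "c \<otimes> w \<otimes> (x \<otimes> x) = x \<otimes> w \<otimes> x"
    using carr by (simp add: twist m_assoc)
  also have "\<dots> = w \<otimes> (x \<otimes> w)"
    using braid carr by (simp add: m_assoc)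
  also have "\<dots> = (w \<otimes> c) \<otimes> (w \<otimes> x)"
    using carr by (simp add: twist m_assoc)
  also have "\<dots> = c \<otimes> w \<otimes> (w \<otimes> x)"
    by (simp add: cw)
  finally have "x \<otimes> x = w \<otimes> x"
    using carr by simp
  then show ?thesis
    using carr by simp
qed

end

lemma dvd_3_if_dvd_6_odd:
  assumes "d dvd (6::nat)" "odd d"
  shows "d dvd 3"
proof -
  have "d dvd 2 * 3" "coprime d 2"
    using assms by simp_all
  then show ?thesis
    using coprime_dvd_mult_left_iff coprime_dvd_mult_right_iff by metis
qed

text \<open>With k = (m+1)/2 we have a = (a^2)^k and b = (b^2)^k, so the commutator of a and b is
  the power z^(k k) of the commutator of the squares.\<close>
lemma (in group) central_commutator_if_squares:
  fixes m :: nat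
  assumes carr: "a \<in> carrier G" "b \<in> carrier G" and "odd m"
    and am: "a [^] m = \<one>" and bm: "b [^] m = \<one>"
    and z: "z = a [^] (2::nat) \<otimes> b [^] (2::nat) \<otimes> (inv (a [^] (2::nat)) \<otimes> inv (b [^] (2::nat)))"
    and za: "z \<otimes> a [^] (2::nat) = a [^] (2::nat) \<otimes> z"
    and zb: "z \<otimes> b [^] (2::nat) = b [^] (2::nat) \<otimes> z"
  obtains c where "c \<in> carrier G" "a \<otimes> b = c \<otimes> b \<otimes> a" "c \<otimes> a = a \<otimes> c" "c \<otimes> b = b \<otimes> c"
proof -
  define k where "k = (m + 1) div 2"
  have "2 * k = Suc m"
    using \<open>odd m\<close> by (simp add: k_def)
  then have a_root: "(a [^] (2::nat)) [^] k = a" and b_root: "(b [^] (2::nat)) [^] k = b"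
    using carr am bm by (simp_all add: nat_pow_pow)
  have zc: "z \<in> carrier G"
    using z carr by simp
  have cancel: "inv x \<otimes> (x \<otimes> y) = y" if "x \<in> carrier G" "y \<in> carrier G" for x y
    using that by (simp flip: m_assoc)
  have twist2: "a [^] (2::nat) \<otimes> b [^] (2::nat) = z \<otimes> b [^] (2::nat) \<otimes> a [^] (2::nat)"
    using carr by (simp add: z m_assoc cancel)
  define c where "c = z [^] (k * k)"
  have "c \<in> carrier G"
    using zc by (simp add: c_def)
  moreover have "a \<otimes> b = c \<otimes> b \<otimes> a"
    using pow_twisted_commute[OF _ _ zc twist2 za zb, of k k] carr a_root b_root by (simp add: c_def)
  moreover have commutes_root: "c \<otimes> (x [^] (2::nat)) [^] k = (x [^] (2::nat)) [^] k \<otimes> c"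
    if "x \<in> carrier G" "z \<otimes> x [^] (2::nat) = x [^] (2::nat) \<otimes> z" for x
    using group_commutes_pow[OF group_commutes_pow[OF that(2), symmetric], of "k * k" k] zc that(1)
    by (simp add: c_def)
  then have "c \<otimes> a = a \<otimes> c" "c \<otimes> b = b \<otimes> c"
    using commutes_root[OF carr(1) za] commutes_root[OF carr(2) zb] a_root b_root by simp_all
  ultimately show ?thesis
    using that by blast
qed

text \<open>These are the relations satisfied by the images a, b of (1 1; 0 1) and (1 0; 1 1) in a
  quotient of SL_2(Z) by a normal subgroup containing Gamma(m), the relators and -I:
  b^(m-1) is the image of (1 0; -1 1), and (1 1; 0 1)(1 0; -1 1) has cube -I.\<close>
lemma (in group) generators_collapse:
  fixes m :: nat
  assumes carr: "a \<in> carrier G" "b \<in> carrier G" and "odd m"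
    and am: "a [^] m = \<one>" and bm: "b [^] m = \<one>"
    and z: "z = a [^] (2::nat) \<otimes> b [^] (2::nat) \<otimes> (inv (a [^] (2::nat)) \<otimes> inv (b [^] (2::nat)))"
    and za: "z \<otimes> a [^] (2::nat) = a [^] (2::nat) \<otimes> z"
    and zb: "z \<otimes> b [^] (2::nat) = b [^] (2::nat) \<otimes> z"
    and braid: "a \<otimes> b [^] (m - 1) \<otimes> a = b [^] (m - 1) \<otimes> a \<otimes> b [^] (m - 1)"
    and cube: "(a \<otimes> b [^] (m - 1)) [^] (3::nat) = \<one>"
  shows "a \<otimes> b = \<one>" and "a [^] (3::nat) = \<one>"
proof -
  obtain c where cc: "c \<in> carrier G" and ab: "a \<otimes> b = c \<otimes> b \<otimes> a"
    and ca: "c \<otimes> a = a \<otimes> c" and cb: "c \<otimes> b = b \<otimes> c"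
    using central_commutator_if_squares[OF carr \<open>odd m\<close> am bm z za zb] by blast
  define w where "w = b [^] (m - 1)"
  have wc: "w \<in> carrier G"
    using carr by (simp add: w_def)
  have twist_w: "a \<otimes> w = c [^] (m - 1) \<otimes> w \<otimes> a"
    using pow_twisted_commute[OF carr cc ab ca cb, of 1 "m - 1"] carr by (simp add: w_def)
  have comm_w: "c [^] (m - 1) \<otimes> w = w \<otimes> c [^] (m - 1)"
    using group_commutes_pow[OF group_commutes_pow[OF cb, symmetric], of "m - 1" "m - 1"] carr cc
    by (simp add: w_def)
  have a_w: "a = w"
    using eq_if_braid_twisted[OF carr(1) wc _ twist_w comm_w braid[folded w_def]] cc by simp
  have "Suc (m - 1) = m"
    using \<open>odd m\<close> by (cases m) auto
  then show "a \<otimes> b = \<one>"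
    using a_w carr bm nat_pow_Suc[of b "m - 1"] by (simp add: w_def)
  have "a \<otimes> a = a [^] (2::nat)"
    using carr by (simp add: numeral_2_eq_2)
  then have "a [^] (6::nat) = (a \<otimes> a) [^] (3::nat)"
    using carr by (simp add: nat_pow_pow)
  then have "a [^] (6::nat) = \<one>"
    using cube a_w by (simp add: w_def)
  then have "ord a dvd gcd 6 m"
    using am carr by (simp add: pow_eq_id)
  moreover have "gcd 6 m dvd 3"
    using \<open>odd m\<close> by (intro dvd_3_if_dvd_6_odd) (auto dest: dvd_trans[of 2])
  ultimately show "a [^] (3::nat) = \<one>"
    using carr by (simp add: pow_eq_id) (meson dvd_trans gcd_greatest)
qed

lemma (in group) eq_one_if_pow_3_not_dvd:
  fixes n :: nat
  assumes "x \<in> carrier G" "x [^] (3::nat) = \<one>" "x [^] n = \<one>" "\<not> 3 dvd n"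
  shows "x = \<one>"
proof -
  have "coprime 3 n"
    using assms(4) by (intro prime_imp_coprime) simp_all
  moreover have "ord x dvd gcd 3 n"
    using assms(1-3) by (simp add: pow_eq_id)
  ultimately show ?thesis
    using ord_eq_1 assms(1) by simp
qed

section \<open>The Klein four-group D_3\<close>

fun mtrace :: "mat \<Rightarrow> int" where
  "mtrace (a, b, c, d) = a + d"

lemma mtrace_conj:
  assumes "mdet g = 1"
  shows "mtrace (mmul (mmul g X) (minv g)) = mtrace X"
proof -
  obtain g1 g2 g3 g4 a b c d where "g = (g1, g2, g3, g4)" "X = (a, b, c, d)"
    by (cases g, cases X)
  moreover have "mtrace (mmul (mmul (g1, g2, g3, g4) (a, b, c, d)) (minv (g1, g2, g3, g4)))
      = (g1 * g4 - g2 * g3) * (a + d)"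
    by (simp add: algebra_simps)
  ultimately show ?thesis
    using assms by simp
qed

lemma D3_eq: "D3 = {(1,0,0,1), (2,0,0,2), (0,2,1,0), (0,1,2,0), (2,1,1,1), (1,2,2,2), (1,1,1,2), (2,2,2,1)}"
  by (simp add: D3_def mI_def)

lemma reduced_in_D3_iff:
  assumes "a \<in> {0, 1, 2}" "b \<in> {0, 1, 2}" "c \<in> {0, 1, 2}" "d \<in> {0, 1, 2}"
  shows "(a, b, c, d) \<in> D3 \<longleftrightarrow> (a * d - b * c - 1) mod 3 = 0
           \<and> ((a + d) mod 3 = 0 \<or> (a, b, c, d) \<in> {(1, 0, 0, 1), (2, 0, 0, 2)})"
  using assms unfolding D3_eq by (elim insertE emptyE; simp)

text \<open>Conjugation preserves determinant and trace, so this description makes D_3 normal in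
  SL_2(Z/3Z).\<close>
lemma mred3_in_D3_iff:
  "mred 3 X \<in> D3 \<longleftrightarrow> (mdet X - 1) mod 3 = 0
     \<and> (mtrace X mod 3 = 0 \<or> mred 3 X \<in> {(1, 0, 0, 1), (2, 0, 0, 2)})"
proof -
  obtain a b c d where X: "X = (a, b, c, d)"
    by (cases X)
  have reduced: "x mod 3 \<in> {0, 1, 2}" for x :: int
    by auto
  have "(mtrace (mred 3 X)) mod 3 = mtrace X mod 3"
    using X by (simp add: mod_add_eq)
  then show ?thesis
    using reduced_in_D3_iff[OF reduced reduced reduced reduced, of a b c d]
      mdet_mred_mod[of 3 X] X by simp
qed

lemma mred3_mmul_in_D3: "mred 3 X \<in> D3 \<Longrightarrow> mred 3 Y \<in> D3 \<Longrightarrow> mred 3 (mmul X Y) \<in> D3"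
proof -
  have "X' \<in> D3 \<Longrightarrow> Y' \<in> D3 \<Longrightarrow> mred 3 (mmul X' Y') \<in> D3" for X' Y'
    unfolding D3_eq by (elim insertE emptyE; simp)
  then show "mred 3 X \<in> D3 \<Longrightarrow> mred 3 Y \<in> D3 \<Longrightarrow> mred 3 (mmul X Y) \<in> D3"
    by (metis mred_mmul)
qed

lemma mred3_minv_in_D3: "mred 3 X \<in> D3 \<Longrightarrow> mred 3 (minv X) \<in> D3"
proof -
  have "X' \<in> D3 \<Longrightarrow> mred 3 (minv X') \<in> D3" for X'
    unfolding D3_eq by (elim insertE emptyE; simp)
  then show "mred 3 X \<in> D3 \<Longrightarrow> mred 3 (minv X) \<in> D3"
    by (metis mred_minv)
qed

lemma mred3_mneg_in_D3: "mred 3 X \<in> D3 \<Longrightarrow> mred 3 (mneg X) \<in> D3"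
proof -
  have "X' \<in> D3 \<Longrightarrow> mred 3 (mneg X') \<in> D3" for X'
    unfolding D3_eq by (elim insertE emptyE; simp)
  then show "mred 3 X \<in> D3 \<Longrightarrow> mred 3 (mneg X) \<in> D3"
    by (metis mred_mneg)
qed

lemma mred3_conj_in_D3:
  assumes g: "mdet g = 1" and X: "mred 3 X \<in> D3"
  shows "mred 3 (mmul (mmul g X) (minv g)) \<in> D3"
proof -
  have "mtrace X mod 3 = 0 \<or> (\<exists>S\<in>{mI, mneg mI}. mred 3 X = mred 3 S)"
    using X by (auto simp: mred3_in_D3_iff mI_def)
  then show ?thesis
  proof
    assume "mtrace X mod 3 = 0"
    then show ?thesis
      using X mtrace_conj[OF g] by (simp add: mred3_in_D3_iff mdet_mmul g)
  next
    assume "\<exists>S\<in>{mI, mneg mI}. mred 3 X = mred 3 S"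
    then obtain S where S: "S \<in> {mI, mneg mI}" "mred 3 X = mred 3 S"
      by blast
    then have "mmul (mmul g S) (minv g) = S"
      using mmul_minv_right[OF g] mmul_mneg_mI[of g "minv g"] by auto
    then have "mred 3 (mmul (mmul g X) (minv g)) = mred 3 X"
      using mred_mmul_cong[OF mred_mmul_cong[OF refl S(2)] refl] S(2) by simp
    then show ?thesis
      using X by simp
  qed
qed

lemma relators_mod3_in_D3:
  assumes "3 dvd N" "r \<in> relators N"
  shows "mred 3 r \<in> D3"
proof -
  have "mred 3 (mpow (commut matA matB) n) \<in> D3" for n
  proof (induction n)
    case (Suc n)
    have "mred 3 (commut matA matB) \<in> D3"
      by (simp add: commut_def matA_def matB_def D3_eq)
    then show ?case
      using mred3_mmul_in_D3[OF _ Suc] by simp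
  qed (simp add: D3_eq mI_def)
  moreover have "mred 3 (commut (commut matA matB) matA) \<in> D3"
    and "mred 3 (commut (commut matA matB) matB) \<in> D3"
    by (simp_all add: commut_def matA_def matB_def D3_eq)
  moreover have "mred 3 (mpow matA N) \<in> D3" "mred 3 (mpow matB N) \<in> D3"
  proof -
    obtain k where "N = 3 * k"
      using \<open>3 dvd N\<close> by blast
    then have "mpow matA N = upper (3 * (2 * int k))" "mpow matB N = lower (3 * (2 * int k))"
      by (simp_all add: matA_eq matB_eq mpow_upper mpow_lower)
    then show "mred 3 (mpow matA N) \<in> D3" "mred 3 (mpow matB N) \<in> D3"
      by (simp_all add: upper_def lower_def D3_eq)
  qed
  ultimately show ?thesis
    using assms(2) unfolding relators_def by blast
qed

lemma PhiT_mod3_in_D3: "P \<in> PhiT N \<Longrightarrow> 3 dvd N \<Longrightarrow> mred 3 P \<in> D3"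
proof (induction P rule: PhiT.induct)
  case (conj g r)
  then show ?case
    using mred3_conj_in_D3[OF Gamma2_mdet relators_mod3_in_D3] by blast
next
  case (mult a b)
  then show ?case
    by (simp add: mred3_mmul_in_D3)
next
  case (inv a)
  then show ?case
    by (simp add: mred3_minv_in_D3)
qed (simp_all add: D3_eq mI_def)

lemma mred3_mmul_upper_notin_D3:
  assumes "mred 3 X \<in> D3" "\<not> 3 dvd t"
  shows "mred 3 (mmul X (upper t)) \<notin> D3"
proof -
  have "X' \<in> D3 \<Longrightarrow> t' \<in> {1, 2} \<Longrightarrow> mred 3 (mmul X' (upper t')) \<notin> D3" for X' t'
    unfolding D3_eq by (elim insertE emptyE; simp add: upper_def)
  moreover have "t mod 3 \<in> {1, 2}"
    using assms(2) by (simp add: dvd_eq_mod_eq_0) presburger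
  moreover have "mred 3 (mmul X (upper t)) = mred 3 (mmul (mred 3 X) (upper (t mod 3)))"
  proof -
    have "mred 3 (upper (t mod 3)) = mred 3 (upper t)"
      using mred_upper_mod[of 3 t] by simp
    then show ?thesis
      by (metis mred_mmul mred_mred)
  qed
  ultimately show ?thesis
    using assms(1) by metis
qed

definition SL2 :: "mat monoid" where
  "SL2 = \<lparr>carrier = SL2Z, monoid.mult = mmul, one = mI\<rparr>"

lemma SL2_simps [simp]: "carrier SL2 = SL2Z" "mult SL2 = mmul" "one SL2 = mI"
  by (simp_all add: SL2_def)

lemma SL2Z_iff [simp]: "X \<in> SL2Z \<longleftrightarrow> mdet X = 1"
  by (simp add: SL2Z_def)

lemma group_SL2: "group SL2"
proof (rule groupI)
  show "\<exists>y\<in>carrier SL2. y \<otimes>\<^bsub>SL2\<^esub> x = \<one>\<^bsub>SL2\<^esub>" if "x \<in> carrier SL2" for x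
    using that mmul_minv_left by (intro bexI[of _ "minv x"]) auto
qed (auto simp: mdet_mmul mmul_assoc)

interpretation SL2: group SL2
  by (rule group_SL2)

lemma inv_SL2: "mdet X = 1 \<Longrightarrow> inv\<^bsub>SL2\<^esub> X = minv X"
  by (rule SL2.inv_equality) (auto simp: mmul_minv_left)

lemma pow_SL2: "mdet X = 1 \<Longrightarrow> X [^]\<^bsub>SL2\<^esub> (n::nat) = mpow X n"
proof (induction n)
  case (Suc n)
  have "mmul (mpow X n) X = mmul X (mpow X n)"
    using mpow_add[of X n 1] mpow_add[of X 1 n] by simp
  with Suc show ?case
    by simp
qed simp

definition PhiT_cong :: "nat \<Rightarrow> nat \<Rightarrow> mat set" where
  "PhiT_cong N m = {X \<in> SL2Z. \<exists>P\<in>PhiT N. mred m X = mred m P}"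

lemma subgroup_PhiT_cong: "subgroup (PhiT_cong N m) SL2"
proof (rule SL2.subgroupI)
  have "mI \<in> PhiT_cong N m"
    using PhiT.one[of N] by (auto simp: PhiT_cong_def)
  then show "PhiT_cong N m \<noteq> {}"
    by blast
next
  fix X assume "X \<in> PhiT_cong N m"
  then obtain P where "X \<in> SL2Z" "P \<in> PhiT N" "mred m X = mred m P"
    by (auto simp: PhiT_cong_def)
  then show "inv\<^bsub>SL2\<^esub> X \<in> PhiT_cong N m"
    by (auto simp: PhiT_cong_def inv_SL2 intro!: bexI[of _ "minv P"] PhiT.inv mred_minv_cong)
next
  fix X Y assume "X \<in> PhiT_cong N m" "Y \<in> PhiT_cong N m"
  then obtain P Q where "X \<in> SL2Z" "P \<in> PhiT N" "mred m X = mred m P"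
    and "Y \<in> SL2Z" "Q \<in> PhiT N" "mred m Y = mred m Q"
    by (auto simp: PhiT_cong_def)
  then show "X \<otimes>\<^bsub>SL2\<^esub> Y \<in> PhiT_cong N m"
    by (auto simp: PhiT_cong_def mdet_mmul intro!: bexI[of _ "mmul P Q"] PhiT.mult mred_mmul_cong)
qed (auto simp: PhiT_cong_def)

text \<open>Normality rests on Gamma(2) surjecting onto SL_2(Z/mZ) for odd m.\<close>
lemma normal_PhiT_cong:
  assumes "odd m"
  shows "PhiT_cong N m \<lhd> SL2"
  unfolding SL2.normal_inv_iff
proof (intro conjI subgroup_PhiT_cong ballI)
  fix g X assume g: "g \<in> carrier SL2" and "X \<in> PhiT_cong N m"
  then obtain P where P: "mdet X = 1" "P \<in> PhiT N" "mred m X = mred m P"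
    by (auto simp: PhiT_cong_def)
  obtain g' where g': "g' \<in> Gamma2" "mred m g' = mred m g"
    using Gamma2_surj_mod_odd[OF assms, of g] g by auto
  have "mred m (mmul (mmul g X) (minv g)) = mred m (mmul (mmul g' P) (minv g'))"
    by (intro mred_mmul_cong mred_minv_cong g'(2)[symmetric] P(3))
  then show "g \<otimes>\<^bsub>SL2\<^esub> X \<otimes>\<^bsub>SL2\<^esub> inv\<^bsub>SL2\<^esub> g \<in> PhiT_cong N m"
    using g P PhiT_conj_Gamma2[OF P(2) g'(1)]
    by (auto simp: PhiT_cong_def inv_SL2 mdet_mmul)
qed

lemma PhiT_cong_mod3_in_D3:
  assumes "X \<in> PhiT_cong N m" "3 dvd N" "3 dvd m"
  shows "mred 3 X \<in> D3"
proof -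
  obtain P where "P \<in> PhiT N" "mred m X = mred m P"
    using assms(1) by (auto simp: PhiT_cong_def)
  then have "mred 3 X = mred 3 P"
    using mred_mred_dvd[OF assms(3)] by metis
  then show ?thesis
    using PhiT_mod3_in_D3 \<open>P \<in> PhiT N\<close> assms(2) by simp
qed

locale PhiT_quotient =
  fixes N m :: nat
  assumes odd_m: "odd m"
begin

definition Q :: "mat set monoid" where
  "Q = SL2 Mod PhiT_cong N m"

definition phi :: "mat \<Rightarrow> mat set" where
  "phi X = PhiT_cong N m #>\<^bsub>SL2\<^esub> X"

definition alpha :: "mat set" where
  "alpha = phi (upper 1)"

definition beta :: "mat set" where
  "beta = phi (lower 1)"

lemma group_hom_phi: "group_hom SL2 Q phi"
  unfolding Q_def phi_def
  by (intro group_hom.intro group_SL2 group_hom_axioms.intro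
      normal.factorgroup_is_group normal.r_coset_hom_Mod normal_PhiT_cong odd_m)

sublocale Q: group Q
  using group_hom_phi by (simp add: group_hom_def group_hom_axioms_def)

lemma phi_carrier: "mdet X = 1 \<Longrightarrow> phi X \<in> carrier Q"
  using group_hom.hom_closed[OF group_hom_phi] by simp

lemma phi_mmul: "mdet X = 1 \<Longrightarrow> mdet Y = 1 \<Longrightarrow> phi (mmul X Y) = phi X \<otimes>\<^bsub>Q\<^esub> phi Y"
  using group_hom.hom_mult[OF group_hom_phi] by simp

lemma phi_minv: "mdet X = 1 \<Longrightarrow> phi (minv X) = inv\<^bsub>Q\<^esub> phi X"
  using group_hom.hom_inv[OF group_hom_phi] by (simp add: inv_SL2)

lemma phi_mpow: "mdet X = 1 \<Longrightarrow> phi (mpow X n) = phi X [^]\<^bsub>Q\<^esub> n"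
  using group_hom.hom_nat_pow[OF group_hom_phi] by (simp add: pow_SL2)

lemma phi_eq_one_iff:
  assumes "mdet X = 1"
  shows "phi X = \<one>\<^bsub>Q\<^esub> \<longleftrightarrow> X \<in> PhiT_cong N m"
proof
  assume "phi X = \<one>\<^bsub>Q\<^esub>"
  moreover have "X \<in> PhiT_cong N m #>\<^bsub>SL2\<^esub> X"
    using SL2.rcos_self[OF _ subgroup_PhiT_cong] assms by simp
  ultimately show "X \<in> PhiT_cong N m"
    by (simp add: phi_def Q_def)
next
  assume "X \<in> PhiT_cong N m"
  then show "phi X = \<one>\<^bsub>Q\<^esub>"
    using SL2.coset_join2[OF _ subgroup_PhiT_cong] assms by (simp add: phi_def Q_def)
qed

lemma phi_eq_if_cong:
  assumes "mdet X = 1" "mdet Y = 1" "mred m X = mred m Y"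
  shows "phi X = phi Y"
proof -
  have "mred m (mmul X (minv Y)) = mred m (mmul Y (minv Y))"
    using assms(3) by (intro mred_mmul_cong refl)
  then have "mmul X (minv Y) \<in> PhiT_cong N m"
    using PhiT.one assms mmul_minv_right[of Y] by (auto simp: PhiT_cong_def mdet_mmul)
  then have "phi (mmul X (minv Y)) = \<one>\<^bsub>Q\<^esub>"
    using assms by (simp add: phi_eq_one_iff mdet_mmul)
  moreover have "mmul (mmul X (minv Y)) Y = X"
    using mmul_minv_left[OF assms(2)] by (simp add: mmul_assoc)
  ultimately show ?thesis
    using phi_mmul[of "mmul X (minv Y)" Y] phi_carrier assms by (simp add: mdet_mmul)
qed

lemma alpha_carrier: "alpha \<in> carrier Q" and beta_carrier: "beta \<in> carrier Q"
  by (simp_all add: alpha_def beta_def phi_carrier)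

lemma phi_upper_nat: "phi (upper (int k)) = alpha [^]\<^bsub>Q\<^esub> k"
  using phi_mpow[of "upper 1" k] by (simp add: mpow_upper alpha_def)

lemma phi_lower_nat: "phi (lower (int k)) = beta [^]\<^bsub>Q\<^esub> k"
  using phi_mpow[of "lower 1" k] by (simp add: mpow_lower beta_def)

lemma phi_upper: "phi (upper t) = alpha [^]\<^bsub>Q\<^esub> nat (t mod int m)"
  and phi_lower: "phi (lower t) = beta [^]\<^bsub>Q\<^esub> nat (t mod int m)"
proof -
  have "t mod int m = int (nat (t mod int m))"
    using odd_m by (simp add: odd_pos)
  then show "phi (upper t) = alpha [^]\<^bsub>Q\<^esub> nat (t mod int m)"
    "phi (lower t) = beta [^]\<^bsub>Q\<^esub> nat (t mod int m)"
    using phi_eq_if_cong[OF _ _ mred_upper_mod] phi_eq_if_cong[OF _ _ mred_lower_mod]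
      phi_upper_nat phi_lower_nat by (metis mdet_upper, metis mdet_lower)
qed

lemma alpha_pow_m: "alpha [^]\<^bsub>Q\<^esub> m = \<one>\<^bsub>Q\<^esub>"
  and beta_pow_m: "beta [^]\<^bsub>Q\<^esub> m = \<one>\<^bsub>Q\<^esub>"
  using phi_upper_nat[of m] phi_upper[of "int m"] phi_lower_nat[of m] phi_lower[of "int m"] by simp_all

lemma phi_relator: "r \<in> relators N \<Longrightarrow> phi r = \<one>\<^bsub>Q\<^esub>"
  using relators_subset_PhiT relators_mdet by (auto simp: phi_eq_one_iff PhiT_cong_def)

lemma phi_commut:
  "mdet X = 1 \<Longrightarrow> mdet Y = 1 \<Longrightarrow>
   phi (commut X Y) = phi X \<otimes>\<^bsub>Q\<^esub> phi Y \<otimes>\<^bsub>Q\<^esub> (inv\<^bsub>Q\<^esub> phi X \<otimes>\<^bsub>Q\<^esub> inv\<^bsub>Q\<^esub> phi Y)"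
  by (simp add: commut_def phi_mmul phi_minv mdet_mmul)

lemma phi_matA: "phi matA = alpha [^]\<^bsub>Q\<^esub> (2::nat)"
  and phi_matB: "phi matB = beta [^]\<^bsub>Q\<^esub> (2::nat)"
  using phi_upper_nat[of 2] phi_lower_nat[of 2] by (simp_all add: matA_eq matB_eq)

lemma phi_commut_matA_matB:
  "phi (commut matA matB) = alpha [^]\<^bsub>Q\<^esub> (2::nat) \<otimes>\<^bsub>Q\<^esub> beta [^]\<^bsub>Q\<^esub> (2::nat)
     \<otimes>\<^bsub>Q\<^esub> (inv\<^bsub>Q\<^esub> (alpha [^]\<^bsub>Q\<^esub> (2::nat)) \<otimes>\<^bsub>Q\<^esub> inv\<^bsub>Q\<^esub> (beta [^]\<^bsub>Q\<^esub> (2::nat)))"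
proof -
  have "mdet matA = 1" "mdet matB = 1"
    by (simp_all add: matA_def matB_def)
  then show ?thesis
    by (simp only: phi_commut phi_matA phi_matB)
qed

lemma phi_commut_matA_matB_commutes:
  assumes "X \<in> {matA, matB}"
  shows "phi (commut matA matB) \<otimes>\<^bsub>Q\<^esub> phi X = phi X \<otimes>\<^bsub>Q\<^esub> phi (commut matA matB)"
proof -
  have det: "mdet (commut matA matB) = 1" "mdet X = 1"
    using assms by (auto simp: commut_def matA_def matB_def)
  have "commut (commut matA matB) X \<in> relators N"
    using assms by (auto simp: relators_def)
  then have "phi (commut matA matB) \<otimes>\<^bsub>Q\<^esub> phi X
      \<otimes>\<^bsub>Q\<^esub> (inv\<^bsub>Q\<^esub> phi (commut matA matB) \<otimes>\<^bsub>Q\<^esub> inv\<^bsub>Q\<^esub> phi X) = \<one>\<^bsub>Q\<^esub>"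
    using phi_relator by (simp only: phi_commut[OF det, symmetric])
  then show ?thesis
    using Q.commute_if_commutator_one[OF phi_carrier[OF det(1)] phi_carrier[OF det(2)]] by simp
qed

lemma phi_lower_minus_one: "phi (lower (- 1)) = beta [^]\<^bsub>Q\<^esub> (m - 1)"
proof -
  have "nat ((- 1) mod int m) = m - 1"
    using odd_m by (simp add: zmod_minus1 odd_pos of_nat_diff)
  then show ?thesis
    using phi_lower[of "- 1"] by simp
qed

lemma braid_relation:
  "alpha \<otimes>\<^bsub>Q\<^esub> beta [^]\<^bsub>Q\<^esub> (m - 1) \<otimes>\<^bsub>Q\<^esub> alpha
     = beta [^]\<^bsub>Q\<^esub> (m - 1) \<otimes>\<^bsub>Q\<^esub> alpha \<otimes>\<^bsub>Q\<^esub> beta [^]\<^bsub>Q\<^esub> (m - 1)"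
proof -
  have "phi (mmul (mmul (upper 1) (lower (- 1))) (upper 1))
      = phi (mmul (mmul (lower (- 1)) (upper 1)) (lower (- 1)))"
    by (simp add: upper_def lower_def)
  then show ?thesis
    by (simp add: phi_mmul mdet_mmul phi_lower_minus_one flip: alpha_def)
qed

lemma cube_relation: "(alpha \<otimes>\<^bsub>Q\<^esub> beta [^]\<^bsub>Q\<^esub> (m - 1)) [^]\<^bsub>Q\<^esub> (3::nat) = \<one>\<^bsub>Q\<^esub>"
proof -
  define S where "S = mmul (upper 1) (lower (- 1))"
  have "mpow S 3 = mneg mI"
    by (simp add: S_def upper_def lower_def mI_def numeral_3_eq_3)
  moreover have "mneg mI \<in> PhiT_cong N m"
    using PhiT.negone by (auto simp: PhiT_cong_def)
  ultimately have "phi (mpow S 3) = \<one>\<^bsub>Q\<^esub>"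
    by (simp add: phi_eq_one_iff)
  moreover have "phi S = alpha \<otimes>\<^bsub>Q\<^esub> beta [^]\<^bsub>Q\<^esub> (m - 1)"
    by (simp add: S_def phi_mmul phi_lower_minus_one alpha_def)
  ultimately show ?thesis
    by (simp add: phi_mpow S_def mdet_mmul)
qed

lemma alpha_beta_relations:
  shows "alpha \<otimes>\<^bsub>Q\<^esub> beta = \<one>\<^bsub>Q\<^esub>" and "alpha [^]\<^bsub>Q\<^esub> (3::nat) = \<one>\<^bsub>Q\<^esub>"
proof -
  have z_central: "phi (commut matA matB) \<otimes>\<^bsub>Q\<^esub> alpha [^]\<^bsub>Q\<^esub> (2::nat)
      = alpha [^]\<^bsub>Q\<^esub> (2::nat) \<otimes>\<^bsub>Q\<^esub> phi (commut matA matB)"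
    "phi (commut matA matB) \<otimes>\<^bsub>Q\<^esub> beta [^]\<^bsub>Q\<^esub> (2::nat)
      = beta [^]\<^bsub>Q\<^esub> (2::nat) \<otimes>\<^bsub>Q\<^esub> phi (commut matA matB)"
    using phi_commut_matA_matB_commutes[of matA] phi_commut_matA_matB_commutes[of matB]
    by (simp_all only: phi_matA phi_matB insert_iff simp_thms)
  show "alpha \<otimes>\<^bsub>Q\<^esub> beta = \<one>\<^bsub>Q\<^esub>" and "alpha [^]\<^bsub>Q\<^esub> (3::nat) = \<one>\<^bsub>Q\<^esub>"
    using Q.generators_collapse[OF alpha_carrier beta_carrier odd_m alpha_pow_m beta_pow_m
        phi_commut_matA_matB z_central braid_relation cube_relation] by simp_all
qed

lemma alpha_eq_one: "\<not> (3 dvd N \<and> 3 dvd m) \<Longrightarrow> alpha = \<one>\<^bsub>Q\<^esub>"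
proof -
  assume not_both: "\<not> (3 dvd N \<and> 3 dvd m)"
  have "mpow matA N \<in> relators N"
    by (simp add: relators_def)
  then have pow_2N: "alpha [^]\<^bsub>Q\<^esub> (2 * N) = \<one>\<^bsub>Q\<^esub>"
    using phi_relator phi_mpow[of matA N] phi_upper_nat[of 2] alpha_carrier
    by (simp add: matA_eq Q.nat_pow_pow)
  note collapse = Q.eq_one_if_pow_3_not_dvd[OF alpha_carrier alpha_beta_relations(2)]
  show ?thesis
  proof (cases "3 dvd m")
    case True
    then have "\<not> 3 dvd 2 * N"
      using not_both by presburger
    then show ?thesis
      using collapse[OF pow_2N] by simp
  next
    case False
    then show ?thesis
      using collapse[OF alpha_pow_m] by simp
  qed
qed

lemma beta_eq: "beta = alpha [^]\<^bsub>Q\<^esub> (2::nat)"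
proof -
  have "alpha [^]\<^bsub>Q\<^esub> (2::nat) \<otimes>\<^bsub>Q\<^esub> alpha = \<one>\<^bsub>Q\<^esub>"
    using alpha_beta_relations(2) alpha_carrier Q.nat_pow_mult[of alpha 2 1] by simp
  then show ?thesis
    using Q.inv_equality alpha_beta_relations(1) Q.inv_comm alpha_carrier beta_carrier
    by (metis Q.nat_pow_closed)
qed

lemma phi_elementary: "E \<in> elementary \<Longrightarrow> \<exists>i::nat. phi E = alpha [^]\<^bsub>Q\<^esub> i"
proof (induction E rule: elementary.induct)
  case mI
  then show ?case
    using group_hom.hom_one[OF group_hom_phi] by (intro exI[of _ 0]) simp
next
  case (upper E t)
  then obtain i :: nat where "phi E = alpha [^]\<^bsub>Q\<^esub> i"
    by blast
  then have "phi (mmul (upper t) E) = alpha [^]\<^bsub>Q\<^esub> (nat (t mod int m) + i)"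
    using upper.hyps elementary_mdet alpha_carrier by (simp add: phi_mmul phi_upper Q.nat_pow_mult)
  then show ?case
    by blast
next
  case (lower E t)
  then obtain i :: nat where "phi E = alpha [^]\<^bsub>Q\<^esub> i"
    by blast
  then have "phi (mmul (lower t) E) = alpha [^]\<^bsub>Q\<^esub> (2 * nat (t mod int m) + i)"
    using lower.hyps elementary_mdet alpha_carrier
    by (simp add: phi_mmul phi_lower beta_eq Q.nat_pow_mult Q.nat_pow_pow)
  then show ?case
    by blast
qed

text \<open>If phi E = alpha^i, then E (1 2i; 0 1) maps to alpha^(3i) = 1, so it reduces mod 3 into D_3;
  but right multiplication by (1 2i; 0 1) moves D_3 off itself unless 3 divides i.\<close>
lemma phi_eq_one_if_D3:
  assumes "3 dvd N" "3 dvd m" "E \<in> elementary" "mred 3 E \<in> D3"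
  shows "phi E = \<one>\<^bsub>Q\<^esub>"
proof -
  obtain i :: nat where i: "phi E = alpha [^]\<^bsub>Q\<^esub> i"
    using phi_elementary[OF assms(3)] by blast
  have "phi (mmul E (upper (int (2 * i)))) = alpha [^]\<^bsub>Q\<^esub> i \<otimes>\<^bsub>Q\<^esub> alpha [^]\<^bsub>Q\<^esub> (2 * i)"
    using elementary_mdet[OF assms(3)] by (simp only: phi_mmul mdet_upper i phi_upper_nat)
  also have "\<dots> = (alpha [^]\<^bsub>Q\<^esub> (3::nat)) [^]\<^bsub>Q\<^esub> i"
    using alpha_carrier by (simp add: Q.nat_pow_mult Q.nat_pow_pow)
  finally have "mmul E (upper (int (2 * i))) \<in> PhiT_cong N m"
    using elementary_mdet[OF assms(3)] alpha_beta_relations(2) by (simp add: phi_eq_one_iff mdet_mmul)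
  then have "3 dvd int (2 * i)"
    using PhiT_cong_mod3_in_D3 assms mred3_mmul_upper_notin_D3 by blast
  then have "3 dvd 2 * i"
    by (metis int_dvd_int_iff of_nat_numeral)
  then have "3 dvd i"
    by presburger
  then obtain k where "i = 3 * k"
    by (elim dvdE)
  then show ?thesis
    using i alpha_beta_relations(2) alpha_carrier by (simp add: Q.nat_pow_pow[symmetric])
qed

lemma cong_PhiT_if:
  assumes det: "int m dvd mdet Y - 1" and D3: "3 dvd N \<and> 3 dvd m \<longrightarrow> mred 3 Y \<in> D3"
  shows "\<exists>P\<in>PhiT N. mred m Y = mred m P"
proof -
  obtain E where E: "E \<in> elementary" "mred m E = mred m Y"
    using congruent_elementary[OF _ det] odd_m by (auto simp: odd_pos)
  have "phi E = \<one>\<^bsub>Q\<^esub>"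
  proof (cases "3 dvd N \<and> 3 dvd m")
    case True
    then have "mred 3 E \<in> D3"
      using D3 E(2) mred_mred_dvd[of 3 m] by metis
    then show ?thesis
      using phi_eq_one_if_D3 True E(1) by blast
  next
    case False
    then show ?thesis
      using phi_elementary[OF E(1)] alpha_eq_one by auto
  qed
  then have "E \<in> PhiT_cong N m"
    using elementary_mdet[OF E(1)] by (simp add: phi_eq_one_iff)
  then show ?thesis
    using E(2) by (auto simp: PhiT_cong_def)
qed

end

section \<open>PSL_2 of the odd profinite integers\<close>

lemma SLhat_odd:
  assumes "G \<in> SLhat" "odd m"
  shows "mred m (G m) = G m" "(mdet (G m) - 1) mod int m = 0" "d dvd m \<Longrightarrow> mred d (G m) = G d"
  using assms by (auto simp: SLhat_def)

lemma SLhat_even: "G \<in> SLhat \<Longrightarrow> even m \<Longrightarrow> G m = (0, 0, 0, 0)"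
  by (auto simp: SLhat_def)

lemma negHat_odd: "odd m \<Longrightarrow> negHat G m = mred m (mneg (G m))"
  by (simp add: negHat_def)

lemma negHat_SLhat:
  assumes G: "G \<in> SLhat"
  shows "negHat G \<in> SLhat"
proof -
  have "mred d (negHat G m) = negHat G d" if "odd m" "d dvd m" for m d
  proof -
    have "odd d"
      using that by (auto dest: dvd_trans)
    have "mred d (negHat G m) = mred d (mneg (mred d (G m)))"
      using that by (simp add: negHat_def mred_mred_dvd flip: mred_mneg)
    also have "\<dots> = negHat G d"
      using \<open>odd d\<close> SLhat_odd(3)[OF G that] by (simp add: negHat_def)
    finally show ?thesis .
  qed
  moreover have "(mdet (negHat G m) - 1) mod int m = 0" if "odd m" for m
    using that SLhat_odd(2)[OF G that] mdet_mred_mod[of m "mneg (G m)"] by (simp add: negHat_def)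
  moreover have "mred m (negHat G m) = negHat G m" if "odd m" for m
    using that by (simp add: negHat_def)
  moreover have "negHat G m = (0, 0, 0, 0)" if "even m" for m
    using that SLhat_even[OF G] by (simp add: negHat_def)
  ultimately show ?thesis
    unfolding SLhat_def by blast
qed

lemma negHat_negHat:
  assumes G: "G \<in> SLhat"
  shows "negHat (negHat G) = G"
proof
  fix m
  show "negHat (negHat G) m = G m"
    using SLhat_odd(1)[OF G] mred_mneg[of m "mneg (G m)", simplified, symmetric]
    by (simp add: negHat_def)
qed

lemma pslhat_of_negHat: "G \<in> SLhat \<Longrightarrow> pslhat_of (negHat G) = pslhat_of G"
  by (auto simp: pslhat_of_def negHat_negHat)

lemma PSLhat_representative:
  assumes "X \<in> PSLhat" "G \<in> X"
  shows "G \<in> SLhat" "X = pslhat_of G"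
proof -
  obtain G0 where G0: "G0 \<in> SLhat" "X = pslhat_of G0"
    using assms(1) by (auto simp: PSLhat_def)
  then have "G = G0 \<or> G = negHat G0"
    using assms(2) by (auto simp: pslhat_of_def)
  then show "G \<in> SLhat" "X = pslhat_of G"
    using G0 negHat_SLhat pslhat_of_negHat by auto
qed

lemma iota_SLhat:
  assumes "mdet M = 1"
  shows "iota M \<in> SLhat"
proof -
  have "mred d (iota M m) = iota M d" if "odd m" "d dvd m" for m d
  proof -
    have "odd d"
      using that by (auto dest: dvd_trans)
    then show ?thesis
      using that by (simp add: iota_def mred_mred_dvd)
  qed
  then show ?thesis
    using assms mdet_mred_mod[of _ M] by (auto simp: SLhat_def iota_def)
qed

lemma negHat_iota: "negHat (iota M) = iota (mneg M)"
  by (auto simp: negHat_def iota_def mred_mneg[of _ M, symmetric])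

lemma image_psl_embed_PhiPrime: "psl_embed ` PhiPrime N = (\<lambda>P. pslhat_of (iota P)) ` PhiT N"
proof -
  have "psl_embed (psl_class M) = pslhat_of (iota M)" for M
    by (simp add: psl_embed_def psl_class_def pslhat_of_def negHat_iota)
  then show ?thesis
    by (auto simp: PhiPrime_def image_image)
qed

lemma image_psl_embed_PhiPrime_subset: "psl_embed ` PhiPrime N \<subseteq> PSLhat"
  unfolding image_psl_embed_PhiPrime PSLhat_def using iota_SLhat PhiT_mdet by blast

lemma openin_PSLhat_top:
  "openin PSLhat_top U \<longleftrightarrow> U \<subseteq> PSLhat \<and> openin SLhat_top {G \<in> SLhat. pslhat_of G \<in> U}"
proof -
  have "istopology (\<lambda>U. U \<subseteq> PSLhat \<and> openin SLhat_top {G \<in> SLhat. pslhat_of G \<in> U})"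
  proof -
    have "{G \<in> SLhat. pslhat_of G \<in> S \<inter> T} = {G \<in> SLhat. pslhat_of G \<in> S} \<inter> {G \<in> SLhat. pslhat_of G \<in> T}"
      "{G \<in> SLhat. pslhat_of G \<in> \<Union>K} = (\<Union>U\<in>K. {G \<in> SLhat. pslhat_of G \<in> U})" for S T K
      by auto
    then show ?thesis
      unfolding istopology_def by (auto intro!: openin_Int openin_Union)
  qed
  then show ?thesis
    unfolding PSLhat_top_def by (simp add: topology_inverse')
qed

lemma topspace_PSLhat_top: "topspace PSLhat_top = PSLhat"
proof -
  have "topspace SLhat_top = SLhat"
    by (simp add: SLhat_top_def)
  moreover have "{G \<in> SLhat. pslhat_of G \<in> PSLhat} = SLhat"
    by (auto simp: PSLhat_def)
  ultimately have "openin PSLhat_top PSLhat"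
    unfolding openin_PSLhat_top by (metis openin_topspace subset_refl)
  then show ?thesis
    using openin_subset[of PSLhat_top] openin_topspace[of PSLhat_top]
    unfolding openin_PSLhat_top by blast
qed

lemma openin_SLhat_top_coordinate: "openin SLhat_top {G \<in> SLhat. G m \<in> A}"
proof -
  let ?P = "product_topology (\<lambda>m. discrete_topology UNIV) UNIV :: (nat \<Rightarrow> mat) topology"
  have "openin ?P {G \<in> topspace ?P. G m \<in> A}"
    by (rule openin_continuous_map_preimage[OF continuous_map_product_projection]) auto
  then have "openin ?P {G. G m \<in> A}"
    by (simp add: PiE_UNIV_domain)
  then show ?thesis
    unfolding SLhat_top_def openin_subtopology by blast
qed

text \<open>Take for m the product of the finitely many odd coordinates constrained by a basic
  open box around G0.\<close>
lemma openin_SLhat_top_nbhd: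
  assumes V: "openin SLhat_top V" and "G0 \<in> V"
  obtains m where "odd m" "\<And>H. H \<in> SLhat \<Longrightarrow> H m = G0 m \<Longrightarrow> H \<in> V"
proof -
  obtain T where T: "openin (product_topology (\<lambda>m. discrete_topology UNIV) UNIV) T" "V = T \<inter> SLhat"
    using V unfolding SLhat_top_def openin_subtopology by blast
  have G0: "G0 \<in> T" "G0 \<in> SLhat"
    using \<open>G0 \<in> V\<close> T(2) by auto
  obtain U where U: "finite {i. U i \<noteq> UNIV}" "G0 \<in> Pi\<^sub>E UNIV U" "Pi\<^sub>E UNIV U \<subseteq> T"
    using T(1) G0(1) unfolding openin_product_topology_alt by auto
  define F where "F = {i. U i \<noteq> UNIV \<and> odd i}"
  have "finite F"
    using U(1) by (rule rev_finite_subset) (auto simp: F_def)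
  define m where "m = \<Prod>F"
  have "odd m"
    unfolding m_def using \<open>finite F\<close> by (simp add: even_prod_iff F_def)
  have "H \<in> V" if H: "H \<in> SLhat" "H m = G0 m" for H
  proof -
    have "H i \<in> U i" for i
    proof (cases "U i = UNIV")
      case False
      have "H i = G0 i"
      proof (cases "odd i")
        case True
        then have "i dvd m"
          unfolding m_def using \<open>finite F\<close> False by (intro dvd_prodI) (auto simp: F_def)
        then show ?thesis
          using SLhat_odd(3)[OF H(1) \<open>odd m\<close>] SLhat_odd(3)[OF G0(2) \<open>odd m\<close>] H(2) by metis
      qed (simp add: SLhat_even[OF H(1)] SLhat_even[OF G0(2)])
      then show ?thesis
        using U(2) by (auto simp: PiE_iff)
    qed simp
    then show ?thesis
      using U(3) T(2) H(1) by (auto simp: PiE_UNIV_domain)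
  qed
  then show ?thesis
    using \<open>odd m\<close> that by blast
qed

definition level_nbhd :: "nat \<Rightarrow> (nat \<Rightarrow> mat) set \<Rightarrow> (nat \<Rightarrow> mat) set set" where
  "level_nbhd m X = {Z \<in> PSLhat. \<exists>G\<in>X. \<exists>H\<in>Z. G m = H m}"

lemma openin_level_nbhd:
  assumes "odd m"
  shows "openin PSLhat_top (level_nbhd m X)"
proof -
  define A where "A = {x. \<exists>G\<in>X. G m = x \<or> G m = mred m (mneg x)}"
  have "pslhat_of G \<in> level_nbhd m X \<longleftrightarrow> G m \<in> A" if "G \<in> SLhat" for G
  proof -
    have "pslhat_of G \<in> PSLhat"
      using that by (simp add: PSLhat_def)
    then show ?thesis
      using assms by (auto simp: level_nbhd_def A_def pslhat_of_def negHat_odd)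
  qed
  then have "{G \<in> SLhat. pslhat_of G \<in> level_nbhd m X} = {G \<in> SLhat. G m \<in> A}"
    by blast
  then show ?thesis
    unfolding openin_PSLhat_top using openin_SLhat_top_coordinate by (simp add: level_nbhd_def)
qed

lemma pslhat_of_agree:
  assumes "odd m" "G0 \<in> SLhat" "G \<in> pslhat_of G0" "H \<in> SLhat" "G m = H m"
  shows "\<exists>H'\<in>pslhat_of H. H' m = G0 m"
proof -
  consider "G = G0" | "G = negHat G0"
    using assms(3) by (auto simp: pslhat_of_def)
  then show ?thesis
  proof cases
    case 1
    then show ?thesis
      using assms(5) by (auto simp: pslhat_of_def)
  next
    case 2
    have "negHat H m = negHat (negHat G0) m"
      using assms(1,5) 2 by (simp add: negHat_odd)
    then show ?thesis
      using negHat_negHat[OF assms(2)] by (auto simp: pslhat_of_def)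
  qed
qed

lemma in_closure_PSLhatD:
  assumes "X \<in> PSLhat_top closure_of S" "odd m"
  shows "\<exists>Y\<in>S. \<exists>G\<in>X. \<exists>H\<in>Y. G m = H m"
proof -
  have "X \<in> PSLhat"
    using assms(1) by (simp add: in_closure_of topspace_PSLhat_top)
  then have "X \<in> level_nbhd m X"
    using PSLhat_representative(1)[OF \<open>X \<in> PSLhat\<close>]
    by (auto simp: level_nbhd_def PSLhat_def pslhat_of_def)
  then obtain Y where "Y \<in> S" "Y \<in> level_nbhd m X"
    using assms openin_level_nbhd[OF assms(2)] by (auto simp: in_closure_of)
  then show ?thesis
    by (auto simp: level_nbhd_def)
qed

lemma in_closure_PSLhatI:
  assumes S: "S \<subseteq> PSLhat" and "X \<in> PSLhat"
    and approx: "\<And>m. odd m \<Longrightarrow> \<exists>Y\<in>S. \<exists>G\<in>X. \<exists>H\<in>Y. G m = H m"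
  shows "X \<in> PSLhat_top closure_of S"
proof -
  obtain G0 where G0: "G0 \<in> SLhat" "X = pslhat_of G0"
    using \<open>X \<in> PSLhat\<close> by (auto simp: PSLhat_def)
  have "\<exists>Y\<in>S. Y \<in> T" if T: "X \<in> T" "openin PSLhat_top T" for T
  proof -
    define V where "V = {G \<in> SLhat. pslhat_of G \<in> T}"
    have "openin SLhat_top V" "G0 \<in> V"
      using T G0 by (simp_all add: V_def openin_PSLhat_top)
    then obtain m where "odd m" and m: "\<And>H. H \<in> SLhat \<Longrightarrow> H m = G0 m \<Longrightarrow> H \<in> V"
      using openin_SLhat_top_nbhd by blast
    obtain Y G H where YGH: "Y \<in> S" "G \<in> X" "H \<in> Y" "G m = H m"
      using approx[OF \<open>odd m\<close>] by blast
    have H: "H \<in> SLhat" "Y = pslhat_of H"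
      using PSLhat_representative[of Y H] YGH(1,3) S by auto
    moreover have "G \<in> pslhat_of G0"
      using YGH(2) G0(2) by simp
    ultimately obtain H' where "H' \<in> pslhat_of H" "H' m = G0 m"
      using pslhat_of_agree[OF \<open>odd m\<close> G0(1)] YGH(4) by blast
    then have "H' \<in> V"
      using m H negHat_SLhat by (auto simp: pslhat_of_def)
    then have "pslhat_of H' \<in> T"
      by (simp add: V_def)
    moreover have "pslhat_of H' = Y"
      using \<open>H' \<in> pslhat_of H\<close> H pslhat_of_negHat by (auto simp: pslhat_of_def)
    ultimately show ?thesis
      using YGH(1) by blast
  qed
  then show ?thesis
    using \<open>X \<in> PSLhat\<close> by (auto simp: in_closure_of topspace_PSLhat_top)
qed

lemma approximate_by_PhiPrime:
  assumes G: "G \<in> SLhat" and D3: "3 dvd N \<longrightarrow> G 3 \<in> D3" and "odd m"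
  shows "\<exists>Y\<in>psl_embed ` PhiPrime N. \<exists>G'\<in>pslhat_of G. \<exists>H\<in>Y. G' m = H m"
proof -
  interpret PhiT_quotient N m
    using \<open>odd m\<close> by unfold_locales
  have "int m dvd mdet (G m) - 1"
    using SLhat_odd(2)[OF G \<open>odd m\<close>] by (simp add: dvd_eq_mod_eq_0)
  moreover have "3 dvd N \<and> 3 dvd m \<longrightarrow> mred 3 (G m) \<in> D3"
    using D3 SLhat_odd(3)[OF G \<open>odd m\<close>] by auto
  ultimately obtain P where P: "P \<in> PhiT N" "mred m (G m) = mred m P"
    using cong_PhiT_if by blast
  then have "G m = iota P m"
    using SLhat_odd(1)[OF G \<open>odd m\<close>] \<open>odd m\<close> by (simp add: iota_def)
  moreover have "pslhat_of (iota P) \<in> psl_embed ` PhiPrime N"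
    using P(1) by (simp add: image_psl_embed_PhiPrime)
  moreover have "G \<in> pslhat_of G" "iota P \<in> pslhat_of (iota P)"
    by (simp_all add: pslhat_of_def)
  ultimately show ?thesis
    by blast
qed

lemma in_closure_PhiPrime:
  assumes "X \<in> PSLhat" "G \<in> X" "3 dvd N \<longrightarrow> G 3 \<in> D3"
  shows "X \<in> PSLhat_top closure_of (psl_embed ` PhiPrime N)"
proof (rule in_closure_PSLhatI[OF image_psl_embed_PhiPrime_subset assms(1)])
  show "\<exists>Y\<in>psl_embed ` PhiPrime N. \<exists>G\<in>X. \<exists>H\<in>Y. G m = H m" if "odd m" for m
    using approximate_by_PhiPrime[OF PSLhat_representative(1)[OF assms(1,2)] assms(3) that]
      PSLhat_representative(2)[OF assms(1,2)] by simp
qed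

lemma closure_PhiPrime_subset_Dhat_odd:
  assumes "3 dvd N"
  shows "PSLhat_top closure_of (psl_embed ` PhiPrime N) \<subseteq> Dhat_odd"
proof
  fix X assume X: "X \<in> PSLhat_top closure_of (psl_embed ` PhiPrime N)"
  then obtain P G H where "P \<in> PhiT N" "G \<in> X" "H \<in> pslhat_of (iota P)" "G 3 = H 3"
    using in_closure_PSLhatD[OF X, of 3] unfolding image_psl_embed_PhiPrime by auto
  then have "H = iota P \<or> H = iota (mneg P)"
    by (simp add: pslhat_of_def negHat_iota)
  moreover have "mred 3 P \<in> D3"
    using PhiT_mod3_in_D3 \<open>P \<in> PhiT N\<close> assms by blast
  ultimately have "H 3 \<in> D3"
    using mred3_mneg_in_D3[of P] by (auto simp: iota_def simp del: mred.simps)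
  moreover have "X \<in> PSLhat"
    using X by (simp add: in_closure_of topspace_PSLhat_top)
  ultimately show "X \<in> Dhat_odd"
    using \<open>G \<in> X\<close> \<open>G 3 = H 3\<close> by (auto simp: Dhat_odd_def intro!: bexI[of _ G])
qed

theorem proposition15:
  fixes N :: nat
  assumes "N \<ge> 1"
  shows "(\<not> 3 dvd N \<longrightarrow> PSLhat_top closure_of (psl_embed ` PhiPrime N) = PSLhat)
       \<and> (3 dvd N \<longrightarrow> PSLhat_top closure_of (psl_embed ` PhiPrime N) = Dhat_odd)"
proof -
  let ?C = "PSLhat_top closure_of (psl_embed ` PhiPrime N)"
  have "?C \<subseteq> PSLhat"
    using closure_of_subset_topspace topspace_PSLhat_top by metis
  moreover have "PSLhat \<subseteq> ?C" if "\<not> 3 dvd N"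
  proof
    fix X assume "X \<in> PSLhat"
    then obtain G where "G \<in> X"
      by (auto simp: PSLhat_def pslhat_of_def)
    then show "X \<in> ?C"
      using in_closure_PhiPrime \<open>X \<in> PSLhat\<close> that by blast
  qed
  moreover have "Dhat_odd \<subseteq> ?C"
    unfolding Dhat_odd_def using in_closure_PhiPrime by blast
  ultimately show ?thesis
    using closure_PhiPrime_subset_Dhat_odd by blast
qed

end
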